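(* Let $G$ be a nonabelian group and let $\psi_1,\dots,\psi_t\in\operatorname{End}(G)$ satisfy $\psi_i([G,G])\le Z(G)$ for all $i$ and $[\psi_i(G),\psi_j(G)]\subseteq Z(G)$ for all $1\le i,j\le t$. For $1\le i\le t$ and $\alpha\in\mathscr{E}$ define $g\circ_{\psi_i,\alpha}h=g\,\psi_i(\alpha(g))\,h\,\psi_i(\alpha(g))^{-1}$. Then \[\Big(G,\ \bigcup_{i=1}^t\{\circ_{\psi_i,\alpha}:\alpha\in\mathscr{E}\}\Big)\] is a brace block.
   Context: $Z(G)$ is the center and $[G,G]$ the commutator subgroup; $[\psi_i(G),\psi_j(G)]$ is the subgroup generated by commutators of elements of $\psi_i(G)$ and $\psi_j(G)$. $\mathscr{E}$ denotes the set of formal expressions $\alpha=n_1\phi_1+\cdots+n_s\phi_s$ with $n_k\in\mathbb Z$, $\phi_k\in\operatorname{End}(G)$ (the free group on $\operatorname{End}(G)$, written additively), acting on $G$ by $\alpha(g)=\phi_1(g^{n_1})\cdots\phi_s(g^{n_s})$. A skew left brace is a triple $(B,\cdot,\circ)$ where $(B,\cdot),(B,\circ)$ are groups and $a\circ(b\cdot c)=(a\circ b)\cdot a^{-1}\cdot(a\circ c)$ for all $a,b,c$, with $a^{-1}$ the inverse in $(B,\cdot)$. A brace block is a set $B$ with a collection $\mathscr O$ of binary operations on $B$ such that $(B,\circ,\star)$ is a skew left brace for every $\circ,\star\in\mathscr O$. *)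

theory Defs
  imports "HOL-Algebra.Algebra"
begin

definition center :: "('a, 'b) monoid_scheme \<Rightarrow> 'a set" where
  "center G = {z \<in> carrier G. \<forall>g \<in> carrier G. z \<otimes>\<^bsub>G\<^esub> g = g \<otimes>\<^bsub>G\<^esub> z}"

text \<open>[A,B]: subgroup generated by the commutators of elements of A and B
  (same commutator convention as the library's derived subgroup).\<close>
definition commutator_subgroup :: "('a, 'b) monoid_scheme \<Rightarrow> 'a set \<Rightarrow> 'a set \<Rightarrow> 'a set" where
  "commutator_subgroup G A B = generate G
     (\<Union>a \<in> A. \<Union>b \<in> B. {a \<otimes>\<^bsub>G\<^esub> b \<otimes>\<^bsub>G\<^esub> inv\<^bsub>G\<^esub> a \<otimes>\<^bsub>G\<^esub> inv\<^bsub>G\<^esub> b})"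

text \<open>Formal expressions alpha = n_1 phi_1 + ... + n_s phi_s, represented as lists of pairs
  (n_k, phi_k) with phi_k an endomorphism of G.\<close>
definition formal_exprs :: "('a, 'b) monoid_scheme \<Rightarrow> (int \<times> ('a \<Rightarrow> 'a)) list set" where
  "formal_exprs G = {xs. \<forall>(n, \<phi>) \<in> set xs. \<phi> \<in> hom G G}"

fun expr_eval :: "('a, 'b) monoid_scheme \<Rightarrow> (int \<times> ('a \<Rightarrow> 'a)) list \<Rightarrow> 'a \<Rightarrow> 'a" where
  "expr_eval G [] g = \<one>\<^bsub>G\<^esub>"
| "expr_eval G ((n, \<phi>) # xs) g = \<phi> (g [^]\<^bsub>G\<^esub> n) \<otimes>\<^bsub>G\<^esub> expr_eval G xs g"

definition circ_op :: "('a, 'b) monoid_scheme \<Rightarrow> ('a \<Rightarrow> 'a) \<Rightarrow> (int \<times> ('a \<Rightarrow> 'a)) list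
    \<Rightarrow> 'a \<Rightarrow> 'a \<Rightarrow> 'a" where
  "circ_op G \<psi> \<alpha> g h =
     g \<otimes>\<^bsub>G\<^esub> \<psi> (expr_eval G \<alpha> g) \<otimes>\<^bsub>G\<^esub> h \<otimes>\<^bsub>G\<^esub> inv\<^bsub>G\<^esub> (\<psi> (expr_eval G \<alpha> g))"

definition skew_left_brace :: "'a set \<Rightarrow> ('a \<Rightarrow> 'a \<Rightarrow> 'a) \<Rightarrow> ('a \<Rightarrow> 'a \<Rightarrow> 'a) \<Rightarrow> bool" where
  "skew_left_brace B ad mu \<longleftrightarrow>
     (\<exists>e1 e2.
        group \<lparr>carrier = B, monoid.mult = ad, one = e1\<rparr> \<and>
        group \<lparr>carrier = B, monoid.mult = mu, one = e2\<rparr> \<and>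
        (\<forall>a \<in> B. \<forall>b \<in> B. \<forall>c \<in> B.
           mu a (ad b c) =
             ad (ad (mu a b) (inv\<^bsub>\<lparr>carrier = B, monoid.mult = ad, one = e1\<rparr>\<^esub> a)) (mu a c)))"

definition brace_block :: "'a set \<Rightarrow> ('a \<Rightarrow> 'a \<Rightarrow> 'a) set \<Rightarrow> bool" where
  "brace_block B Ops \<longleftrightarrow> (\<forall>op1 \<in> Ops. \<forall>op2 \<in> Ops. skew_left_brace B op1 op2)"

end

(* Write u ~ v when u and v differ by a central factor. Let c : G -> G satisfy
   c(x y) ~ c(x) c(y), with all values of c commuting modulo the centre. Conjugation by c(x)
   depends only on the class of c(x), so x o y = x c(x) y c(x)^-1 is associative because
   c(x o y) ~ c(x) c(y); its identity is 1 and the inverse of x is x^-1 conjugated by c(x)^-1.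
   If the values of two such maps c1, c2 also commute with each other modulo the centre,
   both sides of the brace identity at a, b, d equal (a o2 b) times d conjugated by
   c2(a) c1(b). The commutator hypothesis says that all values of the psi_i commute modulo
   the centre; modulo the centre, powers of commuting elements distribute, so every
   x |-> psi_i(alpha(x)) is multiplicative up to a central factor. *)

theory Submission
  imports Defs
begin

section \<open>Congruence modulo the centre\<close>

definition cong_center :: "('a, 'b) monoid_scheme \<Rightarrow> 'a \<Rightarrow> 'a \<Rightarrow> bool" where
  "cong_center G u v \<longleftrightarrow> u \<in> carrier G \<and> v \<in> carrier G \<and> inv\<^bsub>G\<^esub> u \<otimes>\<^bsub>G\<^esub> v \<in> center G"

definition commute_mod_center :: "('a, 'b) monoid_scheme \<Rightarrow> 'a \<Rightarrow> 'a \<Rightarrow> bool" where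
  "commute_mod_center G u v \<longleftrightarrow> cong_center G (u \<otimes>\<^bsub>G\<^esub> v) (v \<otimes>\<^bsub>G\<^esub> u)"

definition conjugate :: "('a, 'b) monoid_scheme \<Rightarrow> 'a \<Rightarrow> 'a \<Rightarrow> 'a" where
  "conjugate G u y = u \<otimes>\<^bsub>G\<^esub> y \<otimes>\<^bsub>G\<^esub> inv\<^bsub>G\<^esub> u"

context group
begin

lemma inv_cancel_left [simp]: "u \<in> carrier G \<Longrightarrow> x \<in> carrier G \<Longrightarrow> inv u \<otimes> (u \<otimes> x) = x"
  by (simp add: m_assoc[symmetric])

lemma inv_cancel_right [simp]: "u \<in> carrier G \<Longrightarrow> x \<in> carrier G \<Longrightarrow> u \<otimes> (inv u \<otimes> x) = x"
  by (simp add: m_assoc[symmetric])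

lemma center_closed: "z \<in> center G \<Longrightarrow> z \<in> carrier G"
  by (simp add: center_def)

lemma center_commute: "z \<in> center G \<Longrightarrow> g \<in> carrier G \<Longrightarrow> z \<otimes> g = g \<otimes> z"
  by (simp add: center_def)

lemma one_in_center: "\<one> \<in> center G"
  by (simp add: center_def)

lemma center_mult_closed:
  assumes z: "z \<in> center G" and w: "w \<in> center G"
  shows "z \<otimes> w \<in> center G"
proof -
  have zc: "z \<in> carrier G" and wc: "w \<in> carrier G" using z w by (simp_all add: center_closed)
  have "z \<otimes> w \<otimes> g = g \<otimes> (z \<otimes> w)" if g: "g \<in> carrier G" for g
  proof -
    have "z \<otimes> w \<otimes> g = z \<otimes> (g \<otimes> w)"
      using zc wc g by (simp add: m_assoc center_commute[OF w g])
    also have "\<dots> = g \<otimes> z \<otimes> w"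
      using zc wc g by (simp add: m_assoc[symmetric] center_commute[OF z g])
    finally show ?thesis using zc wc g by (simp add: m_assoc)
  qed
  then show ?thesis using zc wc by (simp add: center_def)
qed

lemma center_inv_closed:
  assumes z: "z \<in> center G"
  shows "inv z \<in> center G"
proof -
  have zc: "z \<in> carrier G" using z by (rule center_closed)
  have "inv z \<otimes> g = g \<otimes> inv z" if g: "g \<in> carrier G" for g
  proof -
    have "z \<otimes> (g \<otimes> inv z) = g"
      using zc g by (simp add: m_assoc[symmetric] center_commute[OF z g]) (simp add: m_assoc)
    then show ?thesis using zc g by (metis inv_cancel_left m_closed inv_closed)
  qed
  then show ?thesis using zc by (simp add: center_def)
qed

lemma center_conjugate_eq:
  assumes z: "z \<in> center G" and u: "u \<in> carrier G"
  shows "u \<otimes> z \<otimes> inv u = z"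
proof -
  have "u \<otimes> z \<otimes> inv u = z \<otimes> u \<otimes> inv u" by (simp add: center_commute[OF z u])
  then show ?thesis using z u by (simp add: center_closed m_assoc)
qed

lemma cong_center_iff_ex: "cong_center G u v \<longleftrightarrow> u \<in> carrier G \<and> (\<exists>z\<in>center G. v = u \<otimes> z)"
proof
  assume "cong_center G u v"
  then show "u \<in> carrier G \<and> (\<exists>z\<in>center G. v = u \<otimes> z)"
    by (auto simp: cong_center_def m_assoc[symmetric] intro!: bexI[of _ "inv u \<otimes> v"])
next
  assume "u \<in> carrier G \<and> (\<exists>z\<in>center G. v = u \<otimes> z)"
  then show "cong_center G u v"
    by (auto simp: cong_center_def center_closed m_assoc[symmetric])
qed

lemma cong_center_iff_right:
  assumes u: "u \<in> carrier G" and v: "v \<in> carrier G"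
  shows "cong_center G u v \<longleftrightarrow> v \<otimes> inv u \<in> center G"
proof -
  have "u \<otimes> (inv u \<otimes> v) \<otimes> inv u = v \<otimes> inv u"
    and "inv u \<otimes> (v \<otimes> inv u) \<otimes> inv (inv u) = inv u \<otimes> v"
    using u v by (simp_all add: m_assoc)
  then show ?thesis
    using u v center_conjugate_eq[of "inv u \<otimes> v" u] center_conjugate_eq[of "v \<otimes> inv u" "inv u"]
    unfolding cong_center_def by (metis inv_closed)
qed

lemma cong_center_refl: "u \<in> carrier G \<Longrightarrow> cong_center G u u"
  by (simp add: cong_center_def one_in_center)

lemma cong_center_sym:
  assumes "cong_center G u v"
  shows "cong_center G v u"
proof -
  have "inv v \<otimes> u = inv (inv u \<otimes> v)"
    using assms by (simp add: cong_center_def inv_mult_group)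
  then show ?thesis using assms by (simp add: cong_center_def center_inv_closed)
qed

lemma cong_center_trans [trans]:
  assumes "cong_center G u v" and "cong_center G v w"
  shows "cong_center G u w"
proof -
  have "inv u \<otimes> w = (inv u \<otimes> v) \<otimes> (inv v \<otimes> w)"
    using assms by (simp add: cong_center_def m_assoc)
  then show ?thesis using assms by (simp add: cong_center_def center_mult_closed)
qed

lemma cong_center_mult:
  assumes "cong_center G u u'" and "cong_center G v v'"
  shows "cong_center G (u \<otimes> v) (u' \<otimes> v')"
proof -
  obtain z w where z: "z \<in> center G" "u' = u \<otimes> z" and w: "w \<in> center G" "v' = v \<otimes> w"
    and u: "u \<in> carrier G" and v: "v \<in> carrier G"
    using assms by (auto simp: cong_center_iff_ex)
  have "u' \<otimes> v' = u \<otimes> v \<otimes> (z \<otimes> w)"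
    using z w u v
    by (simp add: center_closed m_assoc)
      (simp add: center_closed m_assoc[symmetric] center_commute[OF z(1) v])
  then show ?thesis using u v z w by (auto simp: cong_center_iff_ex intro: center_mult_closed)
qed

lemma cong_center_inv:
  assumes "cong_center G u u'"
  shows "cong_center G (inv u) (inv u')"
proof -
  obtain z where z: "z \<in> center G" "u' = u \<otimes> z" and u: "u \<in> carrier G"
    using assms by (auto simp: cong_center_iff_ex)
  have "inv u' = inv u \<otimes> inv z"
    using z u by (simp add: center_closed inv_mult_group center_commute[OF center_inv_closed])
  then show ?thesis using u z by (auto simp: cong_center_iff_ex intro: center_inv_closed)
qed

lemma conjugate_closed: "u \<in> carrier G \<Longrightarrow> y \<in> carrier G \<Longrightarrow> conjugate G u y \<in> carrier G"
  by (simp add: conjugate_def)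

lemma conjugate_mult:
  "u \<in> carrier G \<Longrightarrow> a \<in> carrier G \<Longrightarrow> b \<in> carrier G \<Longrightarrow>
    conjugate G u (a \<otimes> b) = conjugate G u a \<otimes> conjugate G u b"
  by (simp add: conjugate_def m_assoc)

lemma conjugate_conjugate:
  "u \<in> carrier G \<Longrightarrow> v \<in> carrier G \<Longrightarrow> a \<in> carrier G \<Longrightarrow>
    conjugate G u (conjugate G v a) = conjugate G (u \<otimes> v) a"
  by (simp add: conjugate_def m_assoc inv_mult_group)

lemma conjugate_one: "u \<in> carrier G \<Longrightarrow> conjugate G u \<one> = \<one>"
  by (simp add: conjugate_def)

lemma conjugate_cong_center:
  assumes "cong_center G u v" and y: "y \<in> carrier G"
  shows "conjugate G v y = conjugate G u y"
proof -
  obtain z where z: "z \<in> center G" "v = u \<otimes> z" and u: "u \<in> carrier G"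
    using assms by (auto simp: cong_center_iff_ex)
  have "conjugate G v y = u \<otimes> (z \<otimes> y) \<otimes> inv z \<otimes> inv u"
    using z u y by (simp add: conjugate_def center_closed inv_mult_group m_assoc)
  also have "\<dots> = conjugate G u y"
    using z u y by (simp add: conjugate_def center_closed center_commute m_assoc)
  finally show ?thesis .
qed

lemma commute_mod_center_sym: "commute_mod_center G u v \<Longrightarrow> commute_mod_center G v u"
  by (simp add: commute_mod_center_def cong_center_sym)

lemma commute_mod_center_if_commutator_in_center:
  assumes a: "a \<in> carrier G" and b: "b \<in> carrier G"
    and "a \<otimes> b \<otimes> inv a \<otimes> inv b \<in> center G"
  shows "commute_mod_center G a b"
proof -
  have "a \<otimes> b \<otimes> inv (b \<otimes> a) = a \<otimes> b \<otimes> inv a \<otimes> inv b"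
    using a b by (simp add: inv_mult_group m_assoc)
  then have "cong_center G (b \<otimes> a) (a \<otimes> b)"
    using assms by (simp add: cong_center_iff_right)
  then show ?thesis by (simp add: commute_mod_center_def cong_center_sym)
qed

lemma commute_mod_center_if_commutator_subgroup:
  assumes "commutator_subgroup G A B \<subseteq> center G"
    and "A \<subseteq> carrier G" "B \<subseteq> carrier G" "a \<in> A" "b \<in> B"
  shows "commute_mod_center G a b"
proof (rule commute_mod_center_if_commutator_in_center)
  have "a \<otimes> b \<otimes> inv a \<otimes> inv b \<in> commutator_subgroup G A B"
    unfolding commutator_subgroup_def using assms(4,5) by (intro generate.incl) blast
  then show "a \<otimes> b \<otimes> inv a \<otimes> inv b \<in> center G" using assms(1) by blast
qed (use assms in auto)

lemma cong_center_swap_middle: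
  assumes "commute_mod_center G b c"
    and "a \<in> carrier G" "b \<in> carrier G" "c \<in> carrier G" "d \<in> carrier G"
  shows "cong_center G (a \<otimes> b \<otimes> (c \<otimes> d)) (a \<otimes> c \<otimes> (b \<otimes> d))"
proof -
  have "cong_center G (a \<otimes> (b \<otimes> c) \<otimes> d) (a \<otimes> (c \<otimes> b) \<otimes> d)"
    using assms cong_center_mult[OF cong_center_mult[OF cong_center_refl[of a]] cong_center_refl[of d]]
    by (simp add: commute_mod_center_def)
  then show ?thesis using assms by (simp add: m_assoc)
qed

lemma commute_mod_center_nat_pow:
  assumes uv: "commute_mod_center G u v" and u: "u \<in> carrier G" and v: "v \<in> carrier G"
  shows "commute_mod_center G (u [^] (n::nat)) v"
proof (induction n)
  case 0
  then show ?case using v by (simp add: commute_mod_center_def cong_center_refl)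
next
  case (Suc n)
  have "u [^] Suc n \<otimes> v = u [^] n \<otimes> (u \<otimes> v)" using u v by (simp add: m_assoc)
  also have "cong_center G \<dots> (u [^] n \<otimes> (v \<otimes> u))"
    using uv u by (simp add: commute_mod_center_def cong_center_mult cong_center_refl)
  also have "u [^] n \<otimes> (v \<otimes> u) = (u [^] n \<otimes> v) \<otimes> u" using u v by (simp add: m_assoc)
  also have "cong_center G \<dots> ((v \<otimes> u [^] n) \<otimes> u)"
    using Suc u by (simp add: commute_mod_center_def cong_center_mult cong_center_refl)
  also have "(v \<otimes> u [^] n) \<otimes> u = v \<otimes> u [^] Suc n" using u v by (simp add: m_assoc)
  finally show ?case by (simp add: commute_mod_center_def)
qed

lemma commute_mod_center_inv:
  assumes uv: "commute_mod_center G u v" and u: "u \<in> carrier G" and v: "v \<in> carrier G"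
  shows "commute_mod_center G (inv u) v"
proof -
  have "cong_center G (inv u \<otimes> (u \<otimes> v) \<otimes> inv u) (inv u \<otimes> (v \<otimes> u) \<otimes> inv u)"
    using uv u by (simp add: commute_mod_center_def cong_center_mult cong_center_refl)
  then have "cong_center G (v \<otimes> inv u) (inv u \<otimes> v)"
    using u v by (simp add: m_assoc)
  then show ?thesis by (simp add: commute_mod_center_def cong_center_sym)
qed

lemma commute_mod_center_int_pow_left:
  assumes "commute_mod_center G u v" and u: "u \<in> carrier G" and "v \<in> carrier G"
  shows "commute_mod_center G (u [^] (n::int)) v"
proof -
  have "commute_mod_center G (u [^] nat k) v" for k
    using assms by (rule commute_mod_center_nat_pow)
  moreover have "commute_mod_center G (inv (u [^] nat k)) v" for k
    using \<open>v \<in> carrier G\<close> u by (intro commute_mod_center_inv) (simp_all add: calculation)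
  ultimately show ?thesis by (simp only: int_pow_def2 split: if_split) blast
qed

lemma commute_mod_center_int_pow:
  assumes "commute_mod_center G u v" and "u \<in> carrier G" and "v \<in> carrier G"
  shows "commute_mod_center G (u [^] (n::int)) (v [^] (m::int))"
proof -
  have "commute_mod_center G v (u [^] n)"
    using commute_mod_center_int_pow_left[OF assms] by (rule commute_mod_center_sym)
  then have "commute_mod_center G (v [^] m) (u [^] n)"
    using assms by (intro commute_mod_center_int_pow_left) simp_all
  then show ?thesis by (rule commute_mod_center_sym)
qed

lemma cong_center_conjugate_if_commute:
  assumes "commute_mod_center G u v" and u: "u \<in> carrier G" and v: "v \<in> carrier G"
  shows "cong_center G (conjugate G u v) v"
proof -
  have "cong_center G (u \<otimes> v \<otimes> inv u) (v \<otimes> u \<otimes> inv u)"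
    using assms by (simp add: commute_mod_center_def cong_center_mult cong_center_refl)
  then show ?thesis using u v by (simp add: conjugate_def m_assoc)
qed

lemma cong_center_nat_pow_mult_distrib:
  assumes uv: "commute_mod_center G u v" and u: "u \<in> carrier G" and v: "v \<in> carrier G"
  shows "cong_center G ((u \<otimes> v) [^] (n::nat)) (u [^] n \<otimes> v [^] n)"
proof (induction n)
  case 0
  then show ?case by (simp add: cong_center_refl)
next
  case (Suc n)
  have vnu: "commute_mod_center G (v [^] n) u"
    using commute_mod_center_nat_pow[OF commute_mod_center_sym[OF uv] v u] .
  have "(u \<otimes> v) [^] Suc n = (u \<otimes> v) [^] n \<otimes> (u \<otimes> v)" by simp
  also have "cong_center G \<dots> (u [^] n \<otimes> v [^] n \<otimes> (u \<otimes> v))"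
    using Suc u v by (simp add: cong_center_mult cong_center_refl)
  also have "u [^] n \<otimes> v [^] n \<otimes> (u \<otimes> v) = u [^] n \<otimes> (v [^] n \<otimes> u) \<otimes> v"
    using u v by (simp add: m_assoc)
  also have "cong_center G \<dots> (u [^] n \<otimes> (u \<otimes> v [^] n) \<otimes> v)"
    using vnu u v by (simp add: commute_mod_center_def cong_center_mult cong_center_refl)
  also have "u [^] n \<otimes> (u \<otimes> v [^] n) \<otimes> v = u [^] Suc n \<otimes> v [^] Suc n"
    using u v by (simp add: m_assoc)
  finally show ?case .
qed

lemma cong_center_int_pow_mult_distrib:
  assumes uv: "commute_mod_center G u v" and u: "u \<in> carrier G" and v: "v \<in> carrier G"
  shows "cong_center G ((u \<otimes> v) [^] (n::int)) (u [^] n \<otimes> v [^] n)"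
proof (cases "n < 0")
  case False
  then show ?thesis
    using cong_center_nat_pow_mult_distrib[OF assms, of "nat n"] by (simp add: pow_nat)
next
  case True
  define m where "m = nat (- n)"
  have n: "n = - int m" using True by (simp add: m_def)
  have "(u \<otimes> v) [^] n = inv ((u \<otimes> v) [^] m)" using u v by (simp add: n int_pow_neg_int)
  also have "cong_center G \<dots> (inv (u [^] m \<otimes> v [^] m))"
    using cong_center_inv[OF cong_center_nat_pow_mult_distrib[OF assms]] .
  also have "inv (u [^] m \<otimes> v [^] m) = inv (v [^] m) \<otimes> inv (u [^] m)"
    using u v by (simp add: inv_mult_group)
  also have "cong_center G \<dots> (inv (u [^] m) \<otimes> inv (v [^] m))"
    using commute_mod_center_int_pow[OF commute_mod_center_sym[OF uv] v u, of n n] u v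
    by (simp add: commute_mod_center_def n int_pow_neg_int)
  also have "inv (u [^] m) \<otimes> inv (v [^] m) = u [^] n \<otimes> v [^] n"
    using u v by (simp add: n int_pow_neg_int)
  finally show ?thesis .
qed

end

section \<open>Twisted multiplications\<close>

definition twisted_mult :: "('a, 'b) monoid_scheme \<Rightarrow> ('a \<Rightarrow> 'a) \<Rightarrow> 'a \<Rightarrow> 'a \<Rightarrow> 'a" where
  "twisted_mult G c x y = x \<otimes>\<^bsub>G\<^esub> c x \<otimes>\<^bsub>G\<^esub> y \<otimes>\<^bsub>G\<^esub> inv\<^bsub>G\<^esub> (c x)"

abbreviation twisted_group :: "('a, 'b) monoid_scheme \<Rightarrow> ('a \<Rightarrow> 'a) \<Rightarrow> 'a monoid" where
  "twisted_group G c \<equiv> \<lparr>carrier = carrier G, monoid.mult = twisted_mult G c, one = \<one>\<^bsub>G\<^esub>\<rparr>"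

locale twisting = group G for G (structure) +
  fixes c :: "'a \<Rightarrow> 'a"
  assumes twist_closed: "x \<in> carrier G \<Longrightarrow> c x \<in> carrier G"
    and twist_mult: "x \<in> carrier G \<Longrightarrow> y \<in> carrier G \<Longrightarrow> cong_center G (c (x \<otimes> y)) (c x \<otimes> c y)"
    and twist_commute: "x \<in> carrier G \<Longrightarrow> y \<in> carrier G \<Longrightarrow> commute_mod_center G (c x) (c y)"
begin

lemma twist_one: "cong_center G (c \<one>) \<one>"
proof -
  have c1: "c \<one> \<in> carrier G" by (simp add: twist_closed)
  have "cong_center G (inv (c \<one>) \<otimes> c \<one>) (inv (c \<one>) \<otimes> (c \<one> \<otimes> c \<one>))"
    using c1 twist_mult[of \<one> \<one>] by (intro cong_center_mult cong_center_refl) simp_all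
  moreover have "inv (c \<one>) \<otimes> c \<one> = \<one>" and "inv (c \<one>) \<otimes> (c \<one> \<otimes> c \<one>) = c \<one>"
    using c1 by simp_all
  ultimately show ?thesis by (metis cong_center_sym)
qed

lemma twist_inv:
  assumes x: "x \<in> carrier G"
  shows "cong_center G (c (inv x)) (inv (c x))"
proof -
  have cx: "c x \<in> carrier G" and cix: "c (inv x) \<in> carrier G"
    using x by (simp_all add: twist_closed)
  have "cong_center G (c x \<otimes> c (inv x)) (c \<one>)"
    using cong_center_sym[OF twist_mult[of x "inv x"]] x by simp
  then have "cong_center G (c x \<otimes> c (inv x)) \<one>"
    using twist_one by (rule cong_center_trans)
  then have "cong_center G (inv (c x) \<otimes> (c x \<otimes> c (inv x))) (inv (c x) \<otimes> \<one>)"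
    using cx by (intro cong_center_mult cong_center_refl) simp_all
  then show ?thesis using cx cix by simp
qed

lemma twist_conjugate:
  assumes u: "u \<in> carrier G" and y: "y \<in> carrier G"
  shows "cong_center G (c (conjugate G u y)) (c y)"
proof -
  have "cong_center G (c (conjugate G u y)) (c (u \<otimes> y) \<otimes> c (inv u))"
    using u y by (simp add: conjugate_def twist_mult)
  also have "cong_center G \<dots> (c u \<otimes> c y \<otimes> inv (c u))"
    using u y by (simp add: twist_mult twist_inv cong_center_mult)
  also have "cong_center G \<dots> (c y)"
    using cong_center_conjugate_if_commute[OF twist_commute] u y
    by (simp add: conjugate_def twist_closed)
  finally show ?thesis .
qed

lemma twist_mult_conjugate:
  assumes x: "x \<in> carrier G" and u: "u \<in> carrier G" and y: "y \<in> carrier G"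
  shows "cong_center G (c (x \<otimes> conjugate G u y)) (c x \<otimes> c y)"
proof -
  have "cong_center G (c (x \<otimes> conjugate G u y)) (c x \<otimes> c (conjugate G u y))"
    using x u y by (simp add: twist_mult conjugate_closed)
  also have "cong_center G \<dots> (c x \<otimes> c y)"
    using x u y by (simp add: cong_center_mult cong_center_refl twist_closed twist_conjugate)
  finally show ?thesis .
qed

lemma twisted_mult_eq:
  "x \<in> carrier G \<Longrightarrow> y \<in> carrier G \<Longrightarrow> twisted_mult G c x y = x \<otimes> conjugate G (c x) y"
  by (simp add: twisted_mult_def conjugate_def twist_closed m_assoc)

lemma twisted_mult_closed:
  "x \<in> carrier G \<Longrightarrow> y \<in> carrier G \<Longrightarrow> twisted_mult G c x y \<in> carrier G"
  by (simp add: twisted_mult_def twist_closed)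

lemma twist_twisted_mult:
  "x \<in> carrier G \<Longrightarrow> y \<in> carrier G \<Longrightarrow> cong_center G (c (twisted_mult G c x y)) (c x \<otimes> c y)"
  by (simp add: twisted_mult_eq twist_mult_conjugate twist_closed)

lemma twisted_mult_assoc:
  assumes x: "x \<in> carrier G" and y: "y \<in> carrier G" and z: "z \<in> carrier G"
  shows "twisted_mult G c (twisted_mult G c x y) z = twisted_mult G c x (twisted_mult G c y z)"
proof -
  have "twisted_mult G c (twisted_mult G c x y) z
      = x \<otimes> conjugate G (c x) y \<otimes> conjugate G (c (twisted_mult G c x y)) z"
    using x y z by (simp add: twisted_mult_eq twisted_mult_closed twist_closed conjugate_closed)
  also have "conjugate G (c (twisted_mult G c x y)) z = conjugate G (c x) (conjugate G (c y) z)"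
    using conjugate_cong_center[OF twist_twisted_mult[OF x y, THEN cong_center_sym] z] x y z
    by (simp add: conjugate_conjugate twist_closed)
  also have "x \<otimes> conjugate G (c x) y \<otimes> conjugate G (c x) (conjugate G (c y) z)
      = twisted_mult G c x (twisted_mult G c y z)"
    using x y z by (simp add: twisted_mult_eq twist_closed conjugate_closed conjugate_mult m_assoc)
  finally show ?thesis .
qed

lemma twisted_mult_one_left: "x \<in> carrier G \<Longrightarrow> twisted_mult G c \<one> x = x"
  using conjugate_cong_center[OF twist_one] by (simp add: twisted_mult_eq conjugate_def)

lemma twisted_mult_inverse_left:
  assumes x: "x \<in> carrier G" and y: "y \<in> carrier G"
  shows "twisted_mult G c (conjugate G (inv (c x)) (inv x)) y =
    conjugate G (inv (c x)) (inv x \<otimes> y)"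
proof -
  have "c (conjugate G (inv (c x)) (inv x)) \<in> carrier G"
    using x by (simp add: twist_closed conjugate_closed)
  moreover have "cong_center G (inv (c x)) (c (conjugate G (inv (c x)) (inv x)))"
    using cong_center_trans[OF twist_conjugate twist_inv, THEN cong_center_sym] x
    by (simp add: twist_closed)
  ultimately show ?thesis
    using x y conjugate_cong_center
    by (simp add: twisted_mult_eq conjugate_mult twist_closed conjugate_closed)
qed

lemma group_twisted_group: "group (twisted_group G c)"
proof (rule groupI)
  fix x assume x: "x \<in> carrier (twisted_group G c)"
  show "\<exists>y\<in>carrier (twisted_group G c). y \<otimes>\<^bsub>twisted_group G c\<^esub> x = \<one>\<^bsub>twisted_group G c\<^esub>"
    using x twisted_mult_inverse_left[of x x]
    by (auto simp: twist_closed conjugate_closed conjugate_one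
        intro!: bexI[of _ "conjugate G (inv (c x)) (inv x)"])
qed (auto simp: twisted_mult_closed twisted_mult_assoc twisted_mult_one_left)

lemma twisted_group_inv:
  "x \<in> carrier G \<Longrightarrow> inv\<^bsub>twisted_group G c\<^esub> x = conjugate G (inv (c x)) (inv x)"
  using group.inv_equality[OF group_twisted_group] twisted_mult_inverse_left[of x x]
  by (simp add: twist_closed conjugate_closed conjugate_one)

end

locale twisting_pair = group G + c1: twisting G c1 + c2: twisting G c2 for G (structure) and c1 c2 +
  assumes twist_commute_pair:
    "x \<in> carrier G \<Longrightarrow> y \<in> carrier G \<Longrightarrow> commute_mod_center G (c1 x) (c2 y)"
begin

lemma brace_identity:
  assumes a: "a \<in> carrier G" and b: "b \<in> carrier G" and d: "d \<in> carrier G"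
  shows "twisted_mult G c2 a (twisted_mult G c1 b d) =
    twisted_mult G c1 (twisted_mult G c1 (twisted_mult G c2 a b) (inv\<^bsub>twisted_group G c1\<^esub> a))
      (twisted_mult G c2 a d)"
proof -
  define P where "P = twisted_mult G c2 a b"
  define Q where "Q = twisted_mult G c2 a d"
  define a' where "a' = conjugate G (inv (c1 a)) (inv a)"
  have cs: "c1 a \<in> carrier G" "c1 b \<in> carrier G" "c2 a \<in> carrier G"
    using a b by (simp_all add: c1.twist_closed c2.twist_closed)
  have P: "P = a \<otimes> conjugate G (c2 a) b" "P \<in> carrier G"
    using a b cs by (simp_all add: P_def c2.twisted_mult_eq conjugate_closed)
  have Q: "Q = a \<otimes> conjugate G (c2 a) d" "Q \<in> carrier G"
    using a d cs by (simp_all add: Q_def c2.twisted_mult_eq conjugate_closed)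
  have a': "a' \<in> carrier G" using a cs by (simp add: a'_def conjugate_closed)
  have c1P: "cong_center G (c1 P) (c1 a \<otimes> c1 b)"
    using c1.twist_mult_conjugate[OF a cs(3) b] by (simp add: P(1))
  have "cong_center G (c1 a \<otimes> c1 b \<otimes> inv (c1 a) \<otimes> c2 a) (c1 b \<otimes> c2 a)"
    using c1.twist_commute[OF a b] cs
    by (intro cong_center_mult cong_center_refl)
      (simp_all add: cong_center_conjugate_if_commute[unfolded conjugate_def])
  also have "cong_center G (c1 b \<otimes> c2 a) (c2 a \<otimes> c1 b)"
    using twist_commute_pair[OF b a] by (simp add: commute_mod_center_def)
  finally have key: "cong_center G (c1 a \<otimes> c1 b \<otimes> inv (c1 a) \<otimes> c2 a) (c2 a \<otimes> c1 b)" .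
  have "twisted_mult G c1 (twisted_mult G c1 P a') Q = twisted_mult G c1 P (twisted_mult G c1 a' Q)"
    using P(2) a' Q(2) by (simp add: c1.twisted_mult_assoc)
  also have "twisted_mult G c1 a' Q = conjugate G (inv (c1 a)) (conjugate G (c2 a) d)"
    using c1.twisted_mult_inverse_left[OF a Q(2)] a d cs by (simp add: a'_def Q(1) conjugate_closed)
  also have "twisted_mult G c1 P \<dots> =
      P \<otimes> conjugate G (c1 P) (conjugate G (inv (c1 a)) (conjugate G (c2 a) d))"
    using d P(2) cs by (simp add: c1.twisted_mult_eq conjugate_closed)
  also have "\<dots> = P \<otimes> conjugate G (c1 a \<otimes> c1 b \<otimes> inv (c1 a) \<otimes> c2 a) d"
    using conjugate_cong_center[OF c1P[THEN cong_center_sym]] d cs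
    by (simp add: conjugate_conjugate conjugate_closed m_assoc)
  also have "\<dots> = P \<otimes> conjugate G (c2 a \<otimes> c1 b) d"
    using conjugate_cong_center[OF key d] by simp
  also have "\<dots> = twisted_mult G c2 a (twisted_mult G c1 b d)"
    using a b d P cs
    by (simp add: c1.twisted_mult_eq c2.twisted_mult_eq c1.twisted_mult_closed conjugate_mult
        conjugate_conjugate conjugate_closed m_assoc)
  finally show ?thesis using a by (simp add: P_def Q_def a'_def c1.twisted_group_inv)
qed

theorem skew_left_brace_twisted: "skew_left_brace (carrier G) (twisted_mult G c1) (twisted_mult G c2)"
  unfolding skew_left_brace_def
  using c1.group_twisted_group c2.group_twisted_group brace_identity by blast

end

section \<open>Formal expressions in endomorphisms\<close>

context group
begin

lemma expr_eval_closed: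
  "\<alpha> \<in> formal_exprs G \<Longrightarrow> x \<in> carrier G \<Longrightarrow> expr_eval G \<alpha> x \<in> carrier G"
  by (induction \<alpha>) (auto simp: formal_exprs_def hom_in_carrier)

lemma cong_center_endo_expr_eval_mult:
  assumes \<psi>: "\<psi> \<in> hom G G"
    and comm: "\<And>g h. g \<in> carrier G \<Longrightarrow> h \<in> carrier G \<Longrightarrow> commute_mod_center G (\<psi> g) (\<psi> h)"
    and \<alpha>: "\<alpha> \<in> formal_exprs G" and x: "x \<in> carrier G" and y: "y \<in> carrier G"
  shows "cong_center G (\<psi> (expr_eval G \<alpha> (x \<otimes> y))) (\<psi> (expr_eval G \<alpha> x) \<otimes> \<psi> (expr_eval G \<alpha> y))"
  using \<alpha>
proof (induction \<alpha>)
  case Nil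
  then show ?case using \<psi> by (simp add: cong_center_refl hom_one)
next
  case (Cons p \<beta>)
  obtain n \<phi> where p: "p = (n, \<phi>)" by (cases p)
  have \<phi>: "\<phi> \<in> hom G G" and \<beta>: "\<beta> \<in> formal_exprs G"
    using Cons.prems p by (auto simp: formal_exprs_def)
  have \<psi>\<phi>: "\<psi> \<circ> \<phi> \<in> hom G G" using \<phi> \<psi> by (rule Group.hom_compose)
  have in_carrier: "\<And>g. g \<in> carrier G \<Longrightarrow> \<psi> (\<phi> g) \<in> carrier G"
      "\<And>g. g \<in> carrier G \<Longrightarrow> \<psi> g \<in> carrier G"
    using \<phi> \<psi> by (simp_all add: hom_in_carrier)
  have "\<psi> (\<phi> ((x \<otimes> y) [^] n)) = (\<psi> (\<phi> x) \<otimes> \<psi> (\<phi> y)) [^] n"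
    using hom_int_pow[OF \<psi>\<phi>, of "x \<otimes> y" n] hom_mult[OF \<psi>\<phi> x y] x y is_group by simp
  also have "cong_center G \<dots> (\<psi> (\<phi> x) [^] n \<otimes> \<psi> (\<phi> y) [^] n)"
    using x y in_carrier \<phi> by (intro cong_center_int_pow_mult_distrib comm) (simp_all add: hom_in_carrier)
  also have "\<psi> (\<phi> x) [^] n \<otimes> \<psi> (\<phi> y) [^] n = \<psi> (\<phi> (x [^] n)) \<otimes> \<psi> (\<phi> (y [^] n))"
    using hom_int_pow[OF \<psi>\<phi>] x y is_group by simp
  finally have head:
    "cong_center G (\<psi> (\<phi> ((x \<otimes> y) [^] n))) (\<psi> (\<phi> (x [^] n)) \<otimes> \<psi> (\<phi> (y [^] n)))" .
  have "\<psi> (expr_eval G (p # \<beta>) (x \<otimes> y)) =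
      \<psi> (\<phi> ((x \<otimes> y) [^] n)) \<otimes> \<psi> (expr_eval G \<beta> (x \<otimes> y))"
    using \<psi> \<phi> \<beta> x y by (simp add: p hom_mult hom_in_carrier expr_eval_closed)
  also have "cong_center G \<dots> (\<psi> (\<phi> (x [^] n)) \<otimes> \<psi> (\<phi> (y [^] n)) \<otimes>
      (\<psi> (expr_eval G \<beta> x) \<otimes> \<psi> (expr_eval G \<beta> y)))"
    using head Cons.IH[OF \<beta>] by (rule cong_center_mult)
  also have "cong_center G \<dots> (\<psi> (\<phi> (x [^] n)) \<otimes> \<psi> (expr_eval G \<beta> x) \<otimes>
      (\<psi> (\<phi> (y [^] n)) \<otimes> \<psi> (expr_eval G \<beta> y)))"
    using x y \<phi> \<beta>
    by (intro cong_center_swap_middle comm) (simp_all add: in_carrier hom_in_carrier expr_eval_closed)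
  also have "\<dots> = \<psi> (expr_eval G (p # \<beta>) x) \<otimes> \<psi> (expr_eval G (p # \<beta>) y)"
    using \<psi> \<phi> \<beta> x y by (simp add: p hom_mult hom_in_carrier expr_eval_closed)
  finally show ?case .
qed

lemma twisting_endo_expr_eval:
  assumes "\<psi> \<in> hom G G"
    and "\<And>g h. g \<in> carrier G \<Longrightarrow> h \<in> carrier G \<Longrightarrow> commute_mod_center G (\<psi> g) (\<psi> h)"
    and "\<alpha> \<in> formal_exprs G"
  shows "twisting G (\<lambda>x. \<psi> (expr_eval G \<alpha> x))"
  by unfold_locales
    (use assms in \<open>simp_all add: hom_in_carrier expr_eval_closed cong_center_endo_expr_eval_mult\<close>)

end

lemma circ_op_eq_twisted_mult: "circ_op G \<psi> \<alpha> = twisted_mult G (\<lambda>x. \<psi> (expr_eval G \<alpha> x))"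
  by (intro ext) (simp add: circ_op_def twisted_mult_def)

theorem corollary3p4:
  fixes G :: "('a, 'b) monoid_scheme" and t :: nat and \<psi> :: "nat \<Rightarrow> 'a \<Rightarrow> 'a"
  assumes "group G"
    and "\<not> comm_group G"
    and "\<And>i. i \<in> {1..t} \<Longrightarrow> \<psi> i \<in> hom G G"
    and "\<And>i. i \<in> {1..t} \<Longrightarrow> \<psi> i ` derived G (carrier G) \<subseteq> center G"
    and "\<And>i j. i \<in> {1..t} \<Longrightarrow> j \<in> {1..t} \<Longrightarrow>
           commutator_subgroup G (\<psi> i ` carrier G) (\<psi> j ` carrier G) \<subseteq> center G"
  shows "brace_block (carrier G)
           (\<Union>i \<in> {1..t}. {circ_op G (\<psi> i) \<alpha> | \<alpha>. \<alpha> \<in> formal_exprs G})"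
proof -
  interpret group G by fact
  have comm: "commute_mod_center G (\<psi> i g) (\<psi> j h)"
    if "i \<in> {1..t}" "j \<in> {1..t}" "g \<in> carrier G" "h \<in> carrier G" for i j g h
  proof -
    have "commutator_subgroup G (\<psi> i ` carrier G) (\<psi> j ` carrier G) \<subseteq> center G"
      using assms(5) that by blast
    moreover have "\<psi> i \<in> hom G G" "\<psi> j \<in> hom G G" using assms(3) that by simp_all
    ultimately show ?thesis
      using that by (intro commute_mod_center_if_commutator_subgroup) (auto simp: hom_in_carrier)
  qed
  have "twisting_pair G (\<lambda>x. \<psi> i (expr_eval G \<alpha> x)) (\<lambda>x. \<psi> j (expr_eval G \<beta> x))"
    if "i \<in> {1..t}" "j \<in> {1..t}" "\<alpha> \<in> formal_exprs G" "\<beta> \<in> formal_exprs G" for i j \<alpha> \<beta>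
    using that assms(3) comm
    by (simp add: twisting_pair_def twisting_pair_axioms_def is_group twisting_endo_expr_eval
        expr_eval_closed)
  then show ?thesis
    unfolding brace_block_def circ_op_eq_twisted_mult
    using twisting_pair.skew_left_brace_twisted by fastforce
qed

end
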